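(* Let $(\mathcal{A},m,f)$ be a presheaf of commutative $k$-algebras on a small category $\mathcal{U}$, so that $\bar{\mathbf{C}}'_{\mathrm{GS}}(\mathcal{A})=\bar{\mathbf{C}}'_{\mathrm{tGS}}(\mathcal{A})\oplus\mathbf{C}'_{\mathrm{simp}}(\mathcal{A})$. Let $((m_1,f_1),c_1)\in Z^2\bar{\mathbf{C}}'_{\mathrm{GS}}(\mathcal{A})$, with corresponding first order twisted deformation $\bar{\mathcal{A}}=(\mathcal{A}[\epsilon],m+m_1\epsilon,f+f_1\epsilon,1+c_1\epsilon)$. Then $\bar{\mathcal{A}}$ is a twisted presheaf with central twists, and its underlying presheaf $\underline{\bar{\mathcal{A}}}=(\mathcal{A}[\epsilon],m+m_1\epsilon,f+f_1\epsilon)$ is the first order presheaf deformation corresponding to $(m_1,f_1)\in Z^2\bar{\mathbf{C}}'_{\mathrm{tGS}}(\mathcal{A})$.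
   Context: $k$ is a commutative ring, $k[\epsilon]=k[\epsilon]/(\epsilon^2)$. $\mathbf{C}_{\mathrm{GS}}(\mathcal{A})$ is the Gerstenhaber–Schack complex: total complex of $\mathbf{C}^{p,q}(\mathcal{A})=\prod_{\sigma\in\mathcal{N}_p(\mathcal{U})}\mathrm{Hom}_k(\mathcal{A}(c\sigma)^{\otimes q},\mathcal{A}(d\sigma))$ (product over $p$-simplices $\sigma=(d\sigma=U_0\to\cdots\to U_p=c\sigma)$ of the nerve) with componentwise Hochschild and simplicial differentials, $d_{\mathrm{GS}}=(-1)^{n+1}d_{\mathrm{simp}}+d_{\mathrm{Hoch}}$ in degree $n$. $\bar{\mathbf{C}}'$ denotes normalized (vanishing when an argument is $1$) and reduced (vanishing on degenerate simplices) cochains; $\mathbf{C}_{\mathrm{tGS}}$ is the part with $q\ge1$ and $\mathbf{C}_{\mathrm{simp}}$ the row $q=0$. A degree 2 cochain is written $(m_1,f_1,c_1)\in\mathbf{C}^{0,2}\oplus\mathbf{C}^{1,1}\oplus\mathbf{C}^{2,0}$. A twisted presheaf $(\mathcal{A},m,f,c)$ consists of algebras, algebra maps $u^*=f^u$ ($f^{1_U}=1$) and invertible $c^{u,v}\in\mathcal{A}(W)$ ($v\colon W\to V,u\colon V\to U$) with $c^{u,v}v^*u^*(a)=(uv)^*(a)c^{u,v}$, $c^{u,vw}c^{v,w}=c^{uv,w}w^*(c^{u,v})$, $c^{u,1}=c^{1,u}=1$; it has central twists if all $c^{u,v}$ are central, and then its underlying presheaf is $(\mathcal{A},m,f)$.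 A normalized reduced 2-cocycle $(m_1,f_1,c_1)$ determines the first order twisted deformation $(\mathcal{A}[\epsilon],m+m_1\epsilon,f+f_1\epsilon,1+c_1\epsilon)$ (a twisted presheaf of $k[\epsilon]$-algebras); when $c_1=0$ it is a presheaf deformation. *)

theory Defs
  imports Main "HOL-Library.Product_Plus"
begin

section \<open>Dual numbers k[eps] = k[eps]/(eps^2)\<close>

datatype 'k dnum = DN 'k 'k

instantiation dnum :: (comm_ring_1) comm_ring_1
begin
definition "0 = DN 0 0"
definition "1 = DN 1 0"
fun plus_dnum :: "'a dnum \<Rightarrow> 'a dnum \<Rightarrow> 'a dnum" where
  "plus_dnum (DN a b) (DN c d) = DN (a + c) (b + d)"
fun minus_dnum :: "'a dnum \<Rightarrow> 'a dnum \<Rightarrow> 'a dnum" where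
  "minus_dnum (DN a b) (DN c d) = DN (a - c) (b - d)"
fun uminus_dnum :: "'a dnum \<Rightarrow> 'a dnum" where
  "uminus_dnum (DN a b) = DN (- a) (- b)"
fun times_dnum :: "'a dnum \<Rightarrow> 'a dnum \<Rightarrow> 'a dnum" where
  "times_dnum (DN a b) (DN c d) = DN (a * c) (a * d + b * c)"
instance
proof
  fix x y z :: "'a dnum"
  show "x * y * z = x * (y * z)"
    by (cases x; cases y; cases z) (simp add: algebra_simps)
  show "x * y = y * x"
    by (cases x; cases y) (simp add: algebra_simps)
  show "1 * x = x"
    by (cases x) (simp add: one_dnum_def)
  show "(x + y) * z = x * z + y * z"
    by (cases x; cases y; cases z) (simp add: algebra_simps)
  show "x + y + z = x + (y + z)"
    by (cases x; cases y; cases z) (simp add: algebra_simps)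
  show "x + y = y + x"
    by (cases x; cases y) (simp add: algebra_simps)
  show "0 + x = x"
    by (cases x) (simp add: zero_dnum_def)
  show "- x + x = 0"
    by (cases x) (simp add: zero_dnum_def)
  show "x - y = x + - y"
    by (cases x; cases y) simp
  show "(0::'a dnum) \<noteq> 1"
    by (simp add: zero_dnum_def one_dnum_def)
qed
end

text \<open>A small category given by a set of objects, a set of morphisms, domain, codomain,
  composition (Comp u v = u o v, defined when Cod v = Dom u) and identities.\<close>

record ('o, 'm) cat =
  Obj  :: "'o set"
  Mor  :: "'m set"
  Dom  :: "'m \<Rightarrow> 'o"
  Cod  :: "'m \<Rightarrow> 'o"
  Comp :: "'m \<Rightarrow> 'm \<Rightarrow> 'm"
  Ident :: "'o \<Rightarrow> 'm"

definition category :: "('o, 'm) cat \<Rightarrow> bool" where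
  "category C \<longleftrightarrow>
     (\<forall>u\<in>Mor C. Dom C u \<in> Obj C \<and> Cod C u \<in> Obj C) \<and>
     (\<forall>U\<in>Obj C. Ident C U \<in> Mor C \<and> Dom C (Ident C U) = U \<and> Cod C (Ident C U) = U) \<and>
     (\<forall>u\<in>Mor C. \<forall>v\<in>Mor C. Cod C v = Dom C u \<longrightarrow>
        Comp C u v \<in> Mor C \<and> Dom C (Comp C u v) = Dom C v \<and> Cod C (Comp C u v) = Cod C u) \<and>
     (\<forall>u\<in>Mor C. \<forall>v\<in>Mor C. \<forall>w\<in>Mor C. Cod C w = Dom C v \<longrightarrow> Cod C v = Dom C u \<longrightarrow>
        Comp C (Comp C u v) w = Comp C u (Comp C v w)) \<and>
     (\<forall>u\<in>Mor C. Comp C u (Ident C (Dom C u)) = u \<and> Comp C (Ident C (Cod C u)) u = u)"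

text \<open>Modules over a commutative ring 'r are subsets of an abelian group 'a, with a scalar
  action smult. Algebras are unital associative, with bilinear multiplication.\<close>

definition module_on :: "('r::comm_ring_1 \<Rightarrow> 'a::ab_group_add \<Rightarrow> 'a) \<Rightarrow> 'a set \<Rightarrow> bool" where
  "module_on smult S \<longleftrightarrow>
     0 \<in> S \<and> (\<forall>x\<in>S. \<forall>y\<in>S. x + y \<in> S) \<and> (\<forall>x\<in>S. - x \<in> S) \<and>
     (\<forall>r. \<forall>x\<in>S. smult r x \<in> S) \<and>
     (\<forall>r. \<forall>x\<in>S. \<forall>y\<in>S. smult r (x + y) = smult r x + smult r y) \<and>
     (\<forall>r s. \<forall>x\<in>S. smult (r + s) x = smult r x + smult s x) \<and>
     (\<forall>r s. \<forall>x\<in>S. smult (r * s) x = smult r (smult s x)) \<and>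
     (\<forall>x\<in>S. smult 1 x = x)"

definition algebra_on ::
  "('r::comm_ring_1 \<Rightarrow> 'a::ab_group_add \<Rightarrow> 'a) \<Rightarrow> 'a set \<Rightarrow> ('a \<Rightarrow> 'a \<Rightarrow> 'a) \<Rightarrow> 'a \<Rightarrow> bool" where
  "algebra_on smult S mult e \<longleftrightarrow>
     module_on smult S \<and> e \<in> S \<and>
     (\<forall>x\<in>S. \<forall>y\<in>S. mult x y \<in> S) \<and>
     (\<forall>x\<in>S. \<forall>y\<in>S. \<forall>z\<in>S. mult (x + y) z = mult x z + mult y z) \<and>
     (\<forall>x\<in>S. \<forall>y\<in>S. \<forall>z\<in>S. mult x (y + z) = mult x y + mult x z) \<and>
     (\<forall>r. \<forall>x\<in>S. \<forall>y\<in>S. mult (smult r x) y = smult r (mult x y)) \<and>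
     (\<forall>r. \<forall>x\<in>S. \<forall>y\<in>S. mult x (smult r y) = smult r (mult x y)) \<and>
     (\<forall>x\<in>S. \<forall>y\<in>S. \<forall>z\<in>S. mult (mult x y) z = mult x (mult y z)) \<and>
     (\<forall>x\<in>S. mult e x = x \<and> mult x e = x)"

definition commutative_on :: "'a set \<Rightarrow> ('a \<Rightarrow> 'a \<Rightarrow> 'a) \<Rightarrow> bool" where
  "commutative_on S mult \<longleftrightarrow> (\<forall>x\<in>S. \<forall>y\<in>S. mult x y = mult y x)"

definition algebra_hom ::
  "('r::comm_ring_1 \<Rightarrow> 'a::ab_group_add \<Rightarrow> 'a) \<Rightarrow> 'a set \<Rightarrow> ('a \<Rightarrow> 'a \<Rightarrow> 'a) \<Rightarrow> 'a \<Rightarrow>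
    'a set \<Rightarrow> ('a \<Rightarrow> 'a \<Rightarrow> 'a) \<Rightarrow> 'a \<Rightarrow> ('a \<Rightarrow> 'a) \<Rightarrow> bool" where
  "algebra_hom smult S mult e S' mult' e' g \<longleftrightarrow>
     (\<forall>x\<in>S. g x \<in> S') \<and>
     (\<forall>x\<in>S. \<forall>y\<in>S. g (x + y) = g x + g y) \<and>
     (\<forall>r. \<forall>x\<in>S. g (smult r x) = smult r (g x)) \<and>
     (\<forall>x\<in>S. \<forall>y\<in>S. g (mult x y) = mult' (g x) (g y)) \<and>
     g e = e'"

section \<open>Presheaves and twisted presheaves of algebras\<close>

text \<open>A presheaf (A, m, f) of 'r-algebras on C: A U is the carrier of the algebra at U with
  multiplication m U and unit e U; for u : V \<rightarrow> U, f u = u^* : A U \<rightarrow> A V.\<close>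

definition presheaf ::
  "('o, 'm) cat \<Rightarrow> ('r::comm_ring_1 \<Rightarrow> 'a::ab_group_add \<Rightarrow> 'a) \<Rightarrow> ('o \<Rightarrow> 'a set) \<Rightarrow>
    ('o \<Rightarrow> 'a \<Rightarrow> 'a \<Rightarrow> 'a) \<Rightarrow> ('o \<Rightarrow> 'a) \<Rightarrow> ('m \<Rightarrow> 'a \<Rightarrow> 'a) \<Rightarrow> bool" where
  "presheaf C smult A m e f \<longleftrightarrow>
     (\<forall>U\<in>Obj C. algebra_on smult (A U) (m U) (e U)) \<and>
     (\<forall>u\<in>Mor C. algebra_hom smult (A (Cod C u)) (m (Cod C u)) (e (Cod C u))
                                   (A (Dom C u)) (m (Dom C u)) (e (Dom C u)) (f u)) \<and>
     (\<forall>U\<in>Obj C. \<forall>a\<in>A U. f (Ident C U) a = a) \<and>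
     (\<forall>u\<in>Mor C. \<forall>v\<in>Mor C. Cod C v = Dom C u \<longrightarrow>
        (\<forall>a\<in>A (Cod C u). f (Comp C u v) a = f v (f u a)))"

text \<open>A twisted presheaf (A, m, f, c): for v : W \<rightarrow> V and u : V \<rightarrow> U, c u v = c^{u,v} \<in> A W.\<close>

definition twisted_presheaf ::
  "('o, 'm) cat \<Rightarrow> ('r::comm_ring_1 \<Rightarrow> 'a::ab_group_add \<Rightarrow> 'a) \<Rightarrow> ('o \<Rightarrow> 'a set) \<Rightarrow>
    ('o \<Rightarrow> 'a \<Rightarrow> 'a \<Rightarrow> 'a) \<Rightarrow> ('o \<Rightarrow> 'a) \<Rightarrow> ('m \<Rightarrow> 'a \<Rightarrow> 'a) \<Rightarrow> ('m \<Rightarrow> 'm \<Rightarrow> 'a) \<Rightarrow> bool" where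
  "twisted_presheaf C smult A m e f c \<longleftrightarrow>
     (\<forall>U\<in>Obj C. algebra_on smult (A U) (m U) (e U)) \<and>
     (\<forall>u\<in>Mor C. algebra_hom smult (A (Cod C u)) (m (Cod C u)) (e (Cod C u))
                                   (A (Dom C u)) (m (Dom C u)) (e (Dom C u)) (f u)) \<and>
     (\<forall>U\<in>Obj C. \<forall>a\<in>A U. f (Ident C U) a = a) \<and>
     (\<forall>u\<in>Mor C. \<forall>v\<in>Mor C. Cod C v = Dom C u \<longrightarrow>
        c u v \<in> A (Dom C v) \<and>
        (\<exists>d\<in>A (Dom C v). m (Dom C v) (c u v) d = e (Dom C v) \<and> m (Dom C v) d (c u v) = e (Dom C v)) \<and>
        (\<forall>a\<in>A (Cod C u). m (Dom C v) (c u v) (f v (f u a)) = m (Dom C v) (f (Comp C u v) a) (c u v))) \<and>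
     (\<forall>u\<in>Mor C. \<forall>v\<in>Mor C. \<forall>w\<in>Mor C. Cod C w = Dom C v \<longrightarrow> Cod C v = Dom C u \<longrightarrow>
        m (Dom C w) (c u (Comp C v w)) (c v w) = m (Dom C w) (c (Comp C u v) w) (f w (c u v))) \<and>
     (\<forall>u\<in>Mor C. c u (Ident C (Dom C u)) = e (Dom C u) \<and> c (Ident C (Cod C u)) u = e (Dom C u))"

definition central_twists ::
  "('o, 'm) cat \<Rightarrow> ('o \<Rightarrow> 'a set) \<Rightarrow> ('o \<Rightarrow> 'a \<Rightarrow> 'a \<Rightarrow> 'a) \<Rightarrow> ('m \<Rightarrow> 'm \<Rightarrow> 'a) \<Rightarrow> bool" where
  "central_twists C A m c \<longleftrightarrow>
     (\<forall>u\<in>Mor C. \<forall>v\<in>Mor C. Cod C v = Dom C u \<longrightarrow>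
        (\<forall>x\<in>A (Dom C v). m (Dom C v) (c u v) x = m (Dom C v) x (c u v)))"

section \<open>Nerve, simplices and the Gerstenhaber--Schack complex\<close>

text \<open>A p-simplex sigma = (U_0 \<rightarrow> U_1 \<rightarrow> ... \<rightarrow> U_p) is represented as (U_0, [s_1, ..., s_p])
  with s_i : U_{i-1} \<rightarrow> U_i. Then d sigma = U_0, c sigma = U_p.\<close>

type_synonym ('o, 'm) simplex = "'o \<times> 'm list"

fun is_path :: "('o, 'm) cat \<Rightarrow> 'o \<Rightarrow> 'm list \<Rightarrow> bool" where
  "is_path C U [] \<longleftrightarrow> U \<in> Obj C"
| "is_path C U (s # ss) \<longleftrightarrow> U \<in> Obj C \<and> s \<in> Mor C \<and> Dom C s = U \<and> is_path C (Cod C s) ss"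

definition simplex :: "('o, 'm) cat \<Rightarrow> nat \<Rightarrow> ('o, 'm) simplex \<Rightarrow> bool" where
  "simplex C p \<sigma> \<longleftrightarrow> length (snd \<sigma>) = p \<and> is_path C (fst \<sigma>) (snd \<sigma>)"

fun endpt :: "('o, 'm) cat \<Rightarrow> 'o \<Rightarrow> 'm list \<Rightarrow> 'o" where
  "endpt C U [] = U"
| "endpt C U (s # ss) = endpt C (Cod C s) ss"

definition sdom :: "('o, 'm) simplex \<Rightarrow> 'o" where "sdom \<sigma> = fst \<sigma>"
definition scod :: "('o, 'm) cat \<Rightarrow> ('o, 'm) simplex \<Rightarrow> 'o" where "scod C \<sigma> = endpt C (fst \<sigma>) (snd \<sigma>)"

fun pull :: "('m \<Rightarrow> 'a \<Rightarrow> 'a) \<Rightarrow> 'm list \<Rightarrow> 'a \<Rightarrow> 'a" where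
  "pull f [] = id"
| "pull f (s # ss) = f s \<circ> pull f ss"

definition degenerate :: "('o, 'm) cat \<Rightarrow> ('o, 'm) simplex \<Rightarrow> bool" where
  "degenerate C \<sigma> \<longleftrightarrow> (\<exists>s\<in>set (snd \<sigma>). s = Ident C (Dom C s))"

text \<open>Face maps of a (p+1)-simplex: face 0 drops U_0, face i (1 \<le> i \<le> p) composes
  s_{i+1} o s_i, face (p+1) drops U_{p+1}.\<close>
definition face :: "('o, 'm) cat \<Rightarrow> nat \<Rightarrow> nat \<Rightarrow> ('o, 'm) simplex \<Rightarrow> ('o, 'm) simplex" where
  "face C p i \<sigma> =
     (if i = 0 then (Cod C (hd (snd \<sigma>)), tl (snd \<sigma>))
      else if i = p + 1 then (fst \<sigma>, butlast (snd \<sigma>))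
      else (fst \<sigma>, take (i - 1) (snd \<sigma>) @ [Comp C (snd \<sigma> ! i) (snd \<sigma> ! (i - 1))] @ drop (i + 1) (snd \<sigma>)))"

text \<open>A (p,q)-cochain assigns to each p-simplex sigma a map A(c sigma)^q \<rightarrow> A(d sigma),
  represented as a function on lists of length q.\<close>
type_synonym ('o, 'm, 'a) cochain = "('o, 'm) simplex \<Rightarrow> 'a list \<Rightarrow> 'a"

definition sgn_pow :: "nat \<Rightarrow> 'a::ab_group_add \<Rightarrow> 'a" where
  "sgn_pow i x = (if even i then x else - x)"

definition args :: "('o, 'm) cat \<Rightarrow> ('o \<Rightarrow> 'a set) \<Rightarrow> nat \<Rightarrow> ('o, 'm) simplex \<Rightarrow> 'a list \<Rightarrow> bool" where
  "args C A q \<sigma> as \<longleftrightarrow> length as = q \<and> set as \<subseteq> A (scod C \<sigma>)"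

text \<open>Normalized reduced cochains \<open>\<bar>C'^{p,q}\<close>: k-multilinear, vanishing when an argument is 1,
  and vanishing on degenerate simplices.\<close>
definition nr_cochain ::
  "('o, 'm) cat \<Rightarrow> ('r::comm_ring_1 \<Rightarrow> 'a::ab_group_add \<Rightarrow> 'a) \<Rightarrow> ('o \<Rightarrow> 'a set) \<Rightarrow> ('o \<Rightarrow> 'a) \<Rightarrow>
    nat \<Rightarrow> nat \<Rightarrow> ('o, 'm, 'a) cochain \<Rightarrow> bool" where
  "nr_cochain C smult A e p q \<phi> \<longleftrightarrow>
     (\<forall>\<sigma>. simplex C p \<sigma> \<longrightarrow>
       (\<forall>as. args C A q \<sigma> as \<longrightarrow> \<phi> \<sigma> as \<in> A (sdom \<sigma>)) \<and>
       (\<forall>as i x y. args C A q \<sigma> as \<longrightarrow> i < q \<longrightarrow> x \<in> A (scod C \<sigma>) \<longrightarrow> y \<in> A (scod C \<sigma>) \<longrightarrow>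
          \<phi> \<sigma> (as[i := x + y]) = \<phi> \<sigma> (as[i := x]) + \<phi> \<sigma> (as[i := y])) \<and>
       (\<forall>as i x r. args C A q \<sigma> as \<longrightarrow> i < q \<longrightarrow> x \<in> A (scod C \<sigma>) \<longrightarrow>
          \<phi> \<sigma> (as[i := smult r x]) = smult r (\<phi> \<sigma> (as[i := x]))) \<and>
       (\<forall>as. args C A q \<sigma> as \<longrightarrow> e (scod C \<sigma>) \<in> set as \<longrightarrow> \<phi> \<sigma> as = 0) \<and>
       (\<forall>as. args C A q \<sigma> as \<longrightarrow> degenerate C \<sigma> \<longrightarrow> \<phi> \<sigma> as = 0))"

text \<open>Hochschild differential \<open>C^{p,q} \<rightarrow> C^{p,q+1}\<close>, A(d sigma) being an A(c sigma)-bimodule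
  via sigma^*.\<close>
definition dHoch ::
  "('o, 'm) cat \<Rightarrow> ('o \<Rightarrow> 'a::ab_group_add \<Rightarrow> 'a \<Rightarrow> 'a) \<Rightarrow> ('m \<Rightarrow> 'a \<Rightarrow> 'a) \<Rightarrow> nat \<Rightarrow>
    ('o, 'm, 'a) cochain \<Rightarrow> ('o, 'm, 'a) cochain" where
  "dHoch C m f q \<phi> \<sigma> as =
     m (sdom \<sigma>) (pull f (snd \<sigma>) (as ! 0)) (\<phi> \<sigma> (tl as))
     + (\<Sum>i\<in>{1..q}. sgn_pow i (\<phi> \<sigma> (take (i - 1) as @ [m (scod C \<sigma>) (as ! (i - 1)) (as ! i)] @ drop (i + 1) as)))
     + sgn_pow (q + 1) (m (sdom \<sigma>) (\<phi> \<sigma> (take q as)) (pull f (snd \<sigma>) (as ! q)))"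

definition dsimp ::
  "('o, 'm) cat \<Rightarrow> ('m \<Rightarrow> 'a::ab_group_add \<Rightarrow> 'a) \<Rightarrow> nat \<Rightarrow>
    ('o, 'm, 'a) cochain \<Rightarrow> ('o, 'm, 'a) cochain" where
  "dsimp C f p \<phi> \<sigma> as =
     f (hd (snd \<sigma>)) (\<phi> (face C p 0 \<sigma>) as)
     + (\<Sum>i\<in>{1..p}. sgn_pow i (\<phi> (face C p i \<sigma>) as))
     + sgn_pow (p + 1) (\<phi> (face C p (p + 1) \<sigma>) (map (f (last (snd \<sigma>))) as))"

text \<open>A total cochain of degree n is a family Phi with Phi p \<in> C^{p, n-p} (p \<le> n).
  \<open>d_GS = (-1)^(n+1) d_simp + d_Hoch\<close> in degree n; component in \<open>C^{p, n+1-p}\<close>.\<close>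
definition dGS ::
  "('o, 'm) cat \<Rightarrow> ('o \<Rightarrow> 'a::ab_group_add \<Rightarrow> 'a \<Rightarrow> 'a) \<Rightarrow> ('m \<Rightarrow> 'a \<Rightarrow> 'a) \<Rightarrow> nat \<Rightarrow>
    (nat \<Rightarrow> ('o, 'm, 'a) cochain) \<Rightarrow> nat \<Rightarrow> ('o, 'm, 'a) cochain" where
  "dGS C m f n \<Phi> p \<sigma> as =
     (if p = 0 then 0 else sgn_pow (n + 1) (dsimp C f (p - 1) (\<Phi> (p - 1)) \<sigma> as))
     + (if p \<le> n then dHoch C m f (n - p) (\<Phi> p) \<sigma> as else 0)"

definition Z_GS ::
  "('o, 'm) cat \<Rightarrow> ('r::comm_ring_1 \<Rightarrow> 'a::ab_group_add \<Rightarrow> 'a) \<Rightarrow> ('o \<Rightarrow> 'a set) \<Rightarrow>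
    ('o \<Rightarrow> 'a \<Rightarrow> 'a \<Rightarrow> 'a) \<Rightarrow> ('o \<Rightarrow> 'a) \<Rightarrow> ('m \<Rightarrow> 'a \<Rightarrow> 'a) \<Rightarrow> nat \<Rightarrow>
    (nat \<Rightarrow> ('o, 'm, 'a) cochain) \<Rightarrow> bool" where
  "Z_GS C smult A m e f n \<Phi> \<longleftrightarrow>
     (\<forall>p\<le>n. nr_cochain C smult A e p (n - p) (\<Phi> p)) \<and>
     (\<forall>p\<le>n + 1. \<forall>\<sigma> as. simplex C p \<sigma> \<longrightarrow> args C A (n + 1 - p) \<sigma> as \<longrightarrow> dGS C m f n \<Phi> p \<sigma> as = 0)"

text \<open>n-cocycles of the normalized reduced subcomplex \<open>C_tGS\<close> (the part with q \<ge> 1):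
  components Phi p for p < n; the differential is the restriction of d_GS.\<close>
definition Z_tGS ::
  "('o, 'm) cat \<Rightarrow> ('r::comm_ring_1 \<Rightarrow> 'a::ab_group_add \<Rightarrow> 'a) \<Rightarrow> ('o \<Rightarrow> 'a set) \<Rightarrow>
    ('o \<Rightarrow> 'a \<Rightarrow> 'a \<Rightarrow> 'a) \<Rightarrow> ('o \<Rightarrow> 'a) \<Rightarrow> ('m \<Rightarrow> 'a \<Rightarrow> 'a) \<Rightarrow> nat \<Rightarrow>
    (nat \<Rightarrow> ('o, 'm, 'a) cochain) \<Rightarrow> bool" where
  "Z_tGS C smult A m e f n \<Phi> \<longleftrightarrow>
     (\<forall>p<n. nr_cochain C smult A e p (n - p) (\<Phi> p)) \<and>
     (\<forall>p\<le>n. \<forall>\<sigma> as. simplex C p \<sigma> \<longrightarrow> args C A (n + 1 - p) \<sigma> as \<longrightarrow>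
        dGS C m f n (\<lambda>j. if j < n then \<Phi> j else (\<lambda>_ _. 0)) p \<sigma> as = 0)"

text \<open>m1 U a b \<in> A U; f1 u a for u : V \<rightarrow> U, a \<in> A U; c1 u v \<in> A W for v : W \<rightarrow> V, u : V \<rightarrow> U
  (i.e. the value on the 2-simplex W \<rightarrow> V \<rightarrow> U).\<close>

definition cochain_of_m :: "('o \<Rightarrow> 'a \<Rightarrow> 'a \<Rightarrow> 'a) \<Rightarrow> ('o, 'm, 'a) cochain" where
  "cochain_of_m m1 = (\<lambda>\<sigma> as. m1 (fst \<sigma>) (as ! 0) (as ! 1))"

definition cochain_of_f :: "('m \<Rightarrow> 'a \<Rightarrow> 'a) \<Rightarrow> ('o, 'm, 'a) cochain" where
  "cochain_of_f f1 = (\<lambda>\<sigma> as. f1 (snd \<sigma> ! 0) (as ! 0))"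

definition cochain_of_c :: "('m \<Rightarrow> 'm \<Rightarrow> 'a) \<Rightarrow> ('o, 'm, 'a) cochain" where
  "cochain_of_c c1 = (\<lambda>\<sigma> as. c1 (snd \<sigma> ! 1) (snd \<sigma> ! 0))"

definition GS2 :: "('o \<Rightarrow> 'a::zero \<Rightarrow> 'a \<Rightarrow> 'a) \<Rightarrow> ('m \<Rightarrow> 'a \<Rightarrow> 'a) \<Rightarrow> ('m \<Rightarrow> 'm \<Rightarrow> 'a) \<Rightarrow>
    nat \<Rightarrow> ('o, 'm, 'a) cochain" where
  "GS2 m1 f1 c1 p = (if p = 0 then cochain_of_m m1 else if p = 1 then cochain_of_f f1
                     else if p = 2 then cochain_of_c c1 else (\<lambda>_ _. 0))"

definition tGS2 :: "('o \<Rightarrow> 'a::zero \<Rightarrow> 'a \<Rightarrow> 'a) \<Rightarrow> ('m \<Rightarrow> 'a \<Rightarrow> 'a) \<Rightarrow>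
    nat \<Rightarrow> ('o, 'm, 'a) cochain" where
  "tGS2 m1 f1 p = (if p = 0 then cochain_of_m m1 else if p = 1 then cochain_of_f f1 else (\<lambda>_ _. 0))"

section \<open>First order deformations\<close>

text \<open>A(U)[eps] = A(U) \<oplus> A(U) eps, elements (a, b) = a + b eps; k[eps] acts by
  (r + s eps)(a + b eps) = r a + (r b + s a) eps.\<close>

fun eps_smult :: "('k \<Rightarrow> 'a::ab_group_add \<Rightarrow> 'a) \<Rightarrow> 'k dnum \<Rightarrow> 'a \<times> 'a \<Rightarrow> 'a \<times> 'a" where
  "eps_smult smult (DN r s) (a, b) = (smult r a, smult r b + smult s a)"

definition eps_carrier :: "('o \<Rightarrow> 'a set) \<Rightarrow> 'o \<Rightarrow> ('a \<times> 'a) set" where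
  "eps_carrier A U = A U \<times> A U"

text \<open>m + m1 eps, extended k[eps]-bilinearly.\<close>
fun eps_mult :: "('o \<Rightarrow> 'a::ab_group_add \<Rightarrow> 'a \<Rightarrow> 'a) \<Rightarrow> ('o \<Rightarrow> 'a \<Rightarrow> 'a \<Rightarrow> 'a) \<Rightarrow> 'o \<Rightarrow>
    'a \<times> 'a \<Rightarrow> 'a \<times> 'a \<Rightarrow> 'a \<times> 'a" where
  "eps_mult m m1 U (a, b) (a', b') = (m U a a', m U a b' + m U b a' + m1 U a a')"

definition eps_unit :: "('o \<Rightarrow> 'a::zero) \<Rightarrow> 'o \<Rightarrow> 'a \<times> 'a" where
  "eps_unit e U = (e U, 0)"

text \<open>f + f1 eps, extended k[eps]-linearly.\<close>
fun eps_map :: "('m \<Rightarrow> 'a::ab_group_add \<Rightarrow> 'a) \<Rightarrow> ('m \<Rightarrow> 'a \<Rightarrow> 'a) \<Rightarrow> 'm \<Rightarrow> 'a \<times> 'a \<Rightarrow> 'a \<times> 'a" where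
  "eps_map f f1 u (a, b) = (f u a, f u b + f1 u a)"

text \<open>1 + c1 eps, where c^{u,v} lives in A(W), W = Dom v.\<close>
definition eps_twist :: "('o, 'm) cat \<Rightarrow> ('o \<Rightarrow> 'a) \<Rightarrow> ('m \<Rightarrow> 'm \<Rightarrow> 'a) \<Rightarrow> 'm \<Rightarrow> 'm \<Rightarrow> 'a \<times> 'a" where
  "eps_twist C e c1 u v = (e (Dom C v), c1 u v)"

definition twisted_deformation where
  "twisted_deformation C A m e f m1 f1 c1 =
     (eps_carrier A, eps_mult m m1, eps_unit e, eps_map f f1, eps_twist C e c1)"

definition presheaf_deformation where
  "presheaf_deformation A m e f m1 f1 = (eps_carrier A, eps_mult m m1, eps_unit e, eps_map f f1)"

definition underlying_presheaf where
  "underlying_presheaf T = (case T of (A', m', e', f', c') \<Rightarrow> (A', m', e', f'))"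

end

theory Submission
  imports Defs
begin

text \<open>
  Each component of the cocycle condition for \<open>(m1, f1, c1)\<close>, in bidegree \<open>(p, 3 - p)\<close>,
  is the first order part of one axiom of a twisted presheaf for
  \<open>(A[\<epsilon>], m + m1 \<epsilon>, f + f1 \<epsilon>, 1 + c1 \<epsilon>)\<close>: \<open>(0,3)\<close> gives associativity, \<open>(1,2)\<close>
  multiplicativity of the restriction maps, \<open>(2,1)\<close> the compatibility
  \<open>c(u,v) v\<^sup>* u\<^sup>* = (u v)\<^sup>* c(u,v)\<close> and \<open>(3,0)\<close> the cocycle identity of the twists;
  normalization and reducedness give the unit and identity axioms. No commutativity is
  needed for this. If all \<open>A(U)\<close> are commutative, the twists are central, so cancelling
  the invertible twist in the compatibility shows that the underlying data form a
  presheaf; and the Hochschild part \<open>[c1, -]\<close> of the \<open>(2,1)\<close>-component vanishes, which is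
  why \<open>(m1, f1)\<close> alone is a cocycle of the subcomplex with \<open>q \<ge> 1\<close>.
\<close>

lemma algebra_on_cancel_left:
  assumes alg: "algebra_on smult S mult e"
    and inv: "d \<in> S" "c \<in> S" "mult d c = e"
    and xy: "x \<in> S" "y \<in> S" "mult c x = mult c y"
  shows "x = y"
proof -
  have assoc: "\<And>z. z \<in> S \<Longrightarrow> mult (mult d c) z = mult d (mult c z)"
    and unit: "\<And>z. z \<in> S \<Longrightarrow> mult e z = z"
    using alg inv unfolding algebra_on_def by blast+
  have "x = mult (mult d c) x" using unit xy inv by simp
  also have "\<dots> = mult (mult d c) y" using assoc xy by simp
  also have "\<dots> = y" using unit xy inv by simp
  finally show ?thesis .
qed

lemma presheaf_if_central_twists:
  assumes C: "category C"
    and tw: "twisted_presheaf C smult A m e f c"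
    and central: "central_twists C A m c"
  shows "presheaf C smult A m e f"
  unfolding presheaf_def
proof (intro conjI ballI impI)
  fix u v a
  assume u: "u \<in> Mor C" and v: "v \<in> Mor C" and uv: "Cod C v = Dom C u" and a: "a \<in> A (Cod C u)"
  let ?W = "Dom C v" and ?x = "f v (f u a)" and ?y = "f (Comp C u v) a"
  have W: "?W \<in> Obj C" using C v unfolding category_def by blast
  have alg: "algebra_on smult (A ?W) (m ?W) (e ?W)" using tw W unfolding twisted_presheaf_def by blast
  have hom: "\<And>w. w \<in> Mor C \<Longrightarrow> \<forall>x\<in>A (Cod C w). f w x \<in> A (Dom C w)"
    using tw unfolding twisted_presheaf_def algebra_hom_def by blast
  have "Dom C (Comp C u v) = ?W" "Cod C (Comp C u v) = Cod C u" "Comp C u v \<in> Mor C"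
    using C u v uv unfolding category_def by blast+
  then have y: "?y \<in> A ?W" using hom[of "Comp C u v"] a by simp
  have x: "?x \<in> A ?W" using hom[OF u] hom[OF v] a uv by simp
  obtain d where d: "d \<in> A ?W" "m ?W d (c u v) = e ?W"
    and cuv: "c u v \<in> A ?W" "m ?W (c u v) ?x = m ?W ?y (c u v)"
    using tw u v uv a unfolding twisted_presheaf_def by blast
  have "m ?W (c u v) ?y = m ?W ?y (c u v)"
    using central u v uv y unfolding central_twists_def by blast
  then show "?y = ?x"
    using algebra_on_cancel_left[OF alg d(1) cuv(1) d(2) x y] cuv(2) by simp
qed (use tw in \<open>auto simp: twisted_presheaf_def\<close>)

lemma
  assumes "nr_cochain C smult A e p q \<phi>" "simplex C p \<sigma>" "args C A q \<sigma> as"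
  shows nr_cochain_closed: "\<phi> \<sigma> as \<in> A (sdom \<sigma>)"
    and nr_cochain_add: "\<lbrakk>i < q; x \<in> A (scod C \<sigma>); y \<in> A (scod C \<sigma>)\<rbrakk> \<Longrightarrow>
           \<phi> \<sigma> (as[i := x + y]) = \<phi> \<sigma> (as[i := x]) + \<phi> \<sigma> (as[i := y])"
    and nr_cochain_smult: "\<lbrakk>i < q; x \<in> A (scod C \<sigma>)\<rbrakk> \<Longrightarrow>
           \<phi> \<sigma> (as[i := smult r x]) = smult r (\<phi> \<sigma> (as[i := x]))"
    and nr_cochain_unit: "e (scod C \<sigma>) \<in> set as \<Longrightarrow> \<phi> \<sigma> as = 0"
    and nr_cochain_degenerate: "degenerate C \<sigma> \<Longrightarrow> \<phi> \<sigma> as = 0"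
  using assms unfolding nr_cochain_def by blast+

lemma atLeastAtMost_Suc_0_2: "{Suc 0..2} = {Suc 0, 2 :: nat}"
  by auto

lemma sdom_eq [simp]: "sdom (U, l) = U"
  by (simp add: sdom_def)

lemma scod_eq [simp]: "scod C (U, l) = endpt C U l"
  by (simp add: scod_def)

locale presheaf_of_algebras =
  fixes C :: "('o, 'm) cat"
    and smult :: "'k::comm_ring_1 \<Rightarrow> 'a::ab_group_add \<Rightarrow> 'a"
    and A :: "'o \<Rightarrow> 'a set" and m :: "'o \<Rightarrow> 'a \<Rightarrow> 'a \<Rightarrow> 'a" and e :: "'o \<Rightarrow> 'a"
    and f :: "'m \<Rightarrow> 'a \<Rightarrow> 'a"
  assumes category: "category C"
    and presheaf: "presheaf C smult A m e f"
begin

lemma Dom_in_Obj [simp]: "u \<in> Mor C \<Longrightarrow> Dom C u \<in> Obj C"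
  and Cod_in_Obj [simp]: "u \<in> Mor C \<Longrightarrow> Cod C u \<in> Obj C"
  and Ident_in_Mor [simp]: "U \<in> Obj C \<Longrightarrow> Ident C U \<in> Mor C"
  and Dom_Ident [simp]: "U \<in> Obj C \<Longrightarrow> Dom C (Ident C U) = U"
  and Cod_Ident [simp]: "U \<in> Obj C \<Longrightarrow> Cod C (Ident C U) = U"
  and Comp_in_Mor [simp]: "\<lbrakk>u \<in> Mor C; v \<in> Mor C; Cod C v = Dom C u\<rbrakk> \<Longrightarrow> Comp C u v \<in> Mor C"
  and Dom_Comp [simp]: "\<lbrakk>u \<in> Mor C; v \<in> Mor C; Cod C v = Dom C u\<rbrakk> \<Longrightarrow> Dom C (Comp C u v) = Dom C v"
  and Cod_Comp [simp]: "\<lbrakk>u \<in> Mor C; v \<in> Mor C; Cod C v = Dom C u\<rbrakk> \<Longrightarrow> Cod C (Comp C u v) = Cod C u"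
  using category unfolding category_def by blast+

lemma simplex_0_iff [simp]: "simplex C 0 (U, []) \<longleftrightarrow> U \<in> Obj C"
  by (simp add: simplex_def)

lemma simplex_1_iff [simp]: "simplex C (Suc 0) (U, [u]) \<longleftrightarrow> u \<in> Mor C \<and> U = Dom C u"
  by (auto simp: simplex_def)

lemma simplex_2_iff [simp]:
  "simplex C 2 (U, [v, u]) \<longleftrightarrow> v \<in> Mor C \<and> u \<in> Mor C \<and> U = Dom C v \<and> Cod C v = Dom C u"
  by (auto simp: simplex_def)

lemma simplex_3_iff [simp]:
  "simplex C 3 (U, [w, v, u]) \<longleftrightarrow>
     w \<in> Mor C \<and> v \<in> Mor C \<and> u \<in> Mor C \<and> U = Dom C w \<and> Cod C w = Dom C v \<and> Cod C v = Dom C u"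
  by (auto simp: simplex_def)

lemma simplex_2_cases:
  assumes "simplex C 2 \<sigma>"
  obtains v u where "\<sigma> = (Dom C v, [v, u])" "v \<in> Mor C" "u \<in> Mor C" "Cod C v = Dom C u"
proof -
  obtain W v u where "\<sigma> = (W, [v, u])"
    using assms by (cases \<sigma>) (auto simp: simplex_def numeral_2_eq_2 length_Suc_conv)
  then show ?thesis using assms that by simp
qed

context
  fixes U assumes U: "U \<in> Obj C"
begin

lemma algebra_at: "algebra_on smult (A U) (m U) (e U)"
  using presheaf U unfolding presheaf_def by blast

lemma zero_closed [simp]: "0 \<in> A U"
  and add_closed [simp]: "x \<in> A U \<Longrightarrow> y \<in> A U \<Longrightarrow> x + y \<in> A U"
  and uminus_closed [simp]: "x \<in> A U \<Longrightarrow> - x \<in> A U"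
  and smult_closed [simp]: "x \<in> A U \<Longrightarrow> smult r x \<in> A U"
  and smult_add_right: "x \<in> A U \<Longrightarrow> y \<in> A U \<Longrightarrow> smult r (x + y) = smult r x + smult r y"
  and smult_add_left: "x \<in> A U \<Longrightarrow> smult (r + s) x = smult r x + smult s x"
  and smult_smult: "x \<in> A U \<Longrightarrow> smult (r * s) x = smult r (smult s x)"
  and smult_one: "x \<in> A U \<Longrightarrow> smult 1 x = x"
  using algebra_at unfolding algebra_on_def module_on_def by simp_all

lemma smult_zero_left:
  assumes "x \<in> A U" shows "smult 0 x = 0"
proof -
  have "smult (0 + 0) x = smult 0 x + smult 0 x" by (rule smult_add_left[OF assms])
  then show ?thesis by simp
qed

lemma unit_closed [simp]: "e U \<in> A U"
  and m_closed [simp]: "x \<in> A U \<Longrightarrow> y \<in> A U \<Longrightarrow> m U x y \<in> A U"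
  and m_add_left: "x \<in> A U \<Longrightarrow> y \<in> A U \<Longrightarrow> z \<in> A U \<Longrightarrow> m U (x + y) z = m U x z + m U y z"
  and m_add_right: "x \<in> A U \<Longrightarrow> y \<in> A U \<Longrightarrow> z \<in> A U \<Longrightarrow> m U x (y + z) = m U x y + m U x z"
  and m_smult_left: "x \<in> A U \<Longrightarrow> y \<in> A U \<Longrightarrow> m U (smult r x) y = smult r (m U x y)"
  and m_smult_right: "x \<in> A U \<Longrightarrow> y \<in> A U \<Longrightarrow> m U x (smult r y) = smult r (m U x y)"
  and m_assoc: "x \<in> A U \<Longrightarrow> y \<in> A U \<Longrightarrow> z \<in> A U \<Longrightarrow> m U (m U x y) z = m U x (m U y z)"
  and m_unit_left [simp]: "x \<in> A U \<Longrightarrow> m U (e U) x = x"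
  and m_unit_right [simp]: "x \<in> A U \<Longrightarrow> m U x (e U) = x"
  using algebra_at unfolding algebra_on_def by simp_all

lemma m_zero_left [simp]:
  assumes "x \<in> A U" shows "m U 0 x = 0"
proof -
  have "m U (0 + 0) x = m U 0 x + m U 0 x" by (rule m_add_left) (simp_all add: assms)
  then show ?thesis by simp
qed

lemma m_zero_right [simp]:
  assumes "x \<in> A U" shows "m U x 0 = 0"
proof -
  have "m U x (0 + 0) = m U x 0 + m U x 0" by (rule m_add_right) (simp_all add: assms)
  then show ?thesis by simp
qed

end

lemma f_ident: "U \<in> Obj C \<Longrightarrow> a \<in> A U \<Longrightarrow> f (Ident C U) a = a"
  using presheaf unfolding presheaf_def by blast

lemma f_comp:
  "\<lbrakk>u \<in> Mor C; v \<in> Mor C; Cod C v = Dom C u; a \<in> A (Cod C u)\<rbrakk> \<Longrightarrow> f (Comp C u v) a = f v (f u a)"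
  using presheaf unfolding presheaf_def by blast

context
  fixes u assumes u: "u \<in> Mor C"
begin

lemma f_closed [simp]: "x \<in> A (Cod C u) \<Longrightarrow> f u x \<in> A (Dom C u)"
  and f_add: "x \<in> A (Cod C u) \<Longrightarrow> y \<in> A (Cod C u) \<Longrightarrow> f u (x + y) = f u x + f u y"
  and f_smult: "x \<in> A (Cod C u) \<Longrightarrow> f u (smult r x) = smult r (f u x)"
  and f_mult: "x \<in> A (Cod C u) \<Longrightarrow> y \<in> A (Cod C u) \<Longrightarrow>
         f u (m (Cod C u) x y) = m (Dom C u) (f u x) (f u y)"
  and f_unit [simp]: "f u (e (Cod C u)) = e (Dom C u)"
  using presheaf u unfolding presheaf_def algebra_hom_def by simp_all

lemma f_zero [simp]: "f u 0 = 0"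
proof -
  have "f u (0 + 0) = f u 0 + f u 0" by (rule f_add) (simp_all add: u)
  then show ?thesis by simp
qed

end

end

locale GS_2cocycle = presheaf_of_algebras C smult A m e f
  for C :: "('o, 'm) cat"
    and smult :: "'k::comm_ring_1 \<Rightarrow> 'a::ab_group_add \<Rightarrow> 'a"
    and A m e f +
  fixes m1 :: "'o \<Rightarrow> 'a \<Rightarrow> 'a \<Rightarrow> 'a" and f1 :: "'m \<Rightarrow> 'a \<Rightarrow> 'a" and c1 :: "'m \<Rightarrow> 'm \<Rightarrow> 'a"
  assumes cocycle: "Z_GS C smult A m e f 2 (GS2 m1 f1 c1)"
begin

lemma nr_cochain_GS2: "p \<le> 2 \<Longrightarrow> nr_cochain C smult A e p (2 - p) (GS2 m1 f1 c1 p)"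
  using cocycle unfolding Z_GS_def by blast

lemma nr_cochain_m1: "nr_cochain C smult A e 0 2 (cochain_of_m m1)"
  and nr_cochain_f1: "nr_cochain C smult A e 1 1 (cochain_of_f f1)"
  and nr_cochain_c1: "nr_cochain C smult A e 2 0 (cochain_of_c c1)"
  using nr_cochain_GS2[of 0] nr_cochain_GS2[of 1] nr_cochain_GS2[of 2] by (simp_all add: GS2_def)

lemma dGS_vanishes:
  "\<lbrakk>p \<le> 3; simplex C p \<sigma>; args C A (3 - p) \<sigma> as\<rbrakk> \<Longrightarrow> dGS C m f 2 (GS2 m1 f1 c1) p \<sigma> as = 0"
  using cocycle unfolding Z_GS_def by (simp del: split_paired_All)

context
  fixes U assumes U: "U \<in> Obj C"
begin

lemma m1_closed [simp]: "a \<in> A U \<Longrightarrow> b \<in> A U \<Longrightarrow> m1 U a b \<in> A U"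
  using nr_cochain_closed[OF nr_cochain_m1, of "(U, [])" "[a, b]"] U
  by (simp add: cochain_of_m_def args_def)

lemma m1_add_left: "x \<in> A U \<Longrightarrow> y \<in> A U \<Longrightarrow> b \<in> A U \<Longrightarrow> m1 U (x + y) b = m1 U x b + m1 U y b"
  using nr_cochain_add[OF nr_cochain_m1, of "(U, [])" "[x, b]" 0 x y] U
  by (simp add: cochain_of_m_def args_def)

lemma m1_add_right: "x \<in> A U \<Longrightarrow> y \<in> A U \<Longrightarrow> a \<in> A U \<Longrightarrow> m1 U a (x + y) = m1 U a x + m1 U a y"
  using nr_cochain_add[OF nr_cochain_m1, of "(U, [])" "[a, x]" 1 x y] U
  by (simp add: cochain_of_m_def args_def)

lemma m1_smult_left: "x \<in> A U \<Longrightarrow> b \<in> A U \<Longrightarrow> m1 U (smult r x) b = smult r (m1 U x b)"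
  using nr_cochain_smult[OF nr_cochain_m1, of "(U, [])" "[x, b]" 0 x r] U
  by (simp add: cochain_of_m_def args_def)

lemma m1_smult_right: "x \<in> A U \<Longrightarrow> a \<in> A U \<Longrightarrow> m1 U a (smult r x) = smult r (m1 U a x)"
  using nr_cochain_smult[OF nr_cochain_m1, of "(U, [])" "[a, x]" 1 x r] U
  by (simp add: cochain_of_m_def args_def)

lemma m1_unit_left [simp]: "b \<in> A U \<Longrightarrow> m1 U (e U) b = 0"
  using nr_cochain_unit[OF nr_cochain_m1, of "(U, [])" "[e U, b]"] U
  by (simp add: cochain_of_m_def args_def)

lemma m1_unit_right [simp]: "a \<in> A U \<Longrightarrow> m1 U a (e U) = 0"
  using nr_cochain_unit[OF nr_cochain_m1, of "(U, [])" "[a, e U]"] U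
  by (simp add: cochain_of_m_def args_def)

lemma m1_hochschild_cocycle:
  "\<lbrakk>a \<in> A U; b \<in> A U; c \<in> A U\<rbrakk> \<Longrightarrow>
     m U (m1 U a b) c + m1 U (m U a b) c = m U a (m1 U b c) + m1 U a (m U b c)"
  using dGS_vanishes[of 0 "(U, [])" "[a, b, c]"] U
  by (simp add: cochain_of_m_def args_def dGS_def dHoch_def GS2_def sgn_pow_def atLeastAtMost_Suc_0_2 algebra_simps)

end

context
  fixes u assumes u: "u \<in> Mor C"
begin

lemma f1_closed [simp]: "a \<in> A (Cod C u) \<Longrightarrow> f1 u a \<in> A (Dom C u)"
  using nr_cochain_closed[OF nr_cochain_f1, of "(Dom C u, [u])" "[a]"] u
  by (simp add: cochain_of_f_def args_def)

lemma f1_add: "x \<in> A (Cod C u) \<Longrightarrow> y \<in> A (Cod C u) \<Longrightarrow> f1 u (x + y) = f1 u x + f1 u y"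
  using nr_cochain_add[OF nr_cochain_f1, of "(Dom C u, [u])" "[x]" 0 x y] u
  by (simp add: cochain_of_f_def args_def)

lemma f1_smult: "x \<in> A (Cod C u) \<Longrightarrow> f1 u (smult r x) = smult r (f1 u x)"
  using nr_cochain_smult[OF nr_cochain_f1, of "(Dom C u, [u])" "[x]" 0 x r] u
  by (simp add: cochain_of_f_def args_def)

lemma f1_unit [simp]: "f1 u (e (Cod C u)) = 0"
  using nr_cochain_unit[OF nr_cochain_f1, of "(Dom C u, [u])" "[e (Cod C u)]"] u
  by (simp add: cochain_of_f_def args_def)

lemma f1_mult:
  "\<lbrakk>a \<in> A (Cod C u); b \<in> A (Cod C u)\<rbrakk> \<Longrightarrow>
     f1 u (m (Cod C u) a b) + f u (m1 (Cod C u) a b) =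
     m1 (Dom C u) (f u a) (f u b) + m (Dom C u) (f u a) (f1 u b) + m (Dom C u) (f1 u a) (f u b)"
  using dGS_vanishes[of 1 "(Dom C u, [u])" "[a, b]"] u
  by (simp add: cochain_of_m_def cochain_of_f_def args_def dGS_def dHoch_def dsimp_def face_def
      GS2_def sgn_pow_def algebra_simps)

end

lemma f1_ident [simp]: "U \<in> Obj C \<Longrightarrow> a \<in> A U \<Longrightarrow> f1 (Ident C U) a = 0"
  using nr_cochain_degenerate[OF nr_cochain_f1, of "(U, [Ident C U])" "[a]"]
  by (simp add: cochain_of_f_def args_def degenerate_def)

context
  fixes u v assumes u: "u \<in> Mor C" and v: "v \<in> Mor C" and uv: "Cod C v = Dom C u"
begin

lemma c1_closed [simp]: "c1 u v \<in> A (Dom C v)"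
  using nr_cochain_closed[OF nr_cochain_c1, of "(Dom C v, [v, u])" "[]"] u v uv
  by (simp add: cochain_of_c_def args_def)

lemma f1_comp_twisted:
  "a \<in> A (Cod C u) \<Longrightarrow>
     f1 (Comp C u v) a + m (Dom C v) (f v (f u a)) (c1 u v) =
     f v (f1 u a) + f1 v (f u a) + m (Dom C v) (c1 u v) (f v (f u a))"
  using dGS_vanishes[of 2 "(Dom C v, [v, u])" "[a]"] u v uv
  by (simp add: cochain_of_c_def cochain_of_f_def args_def dGS_def dHoch_def dsimp_def face_def
      GS2_def sgn_pow_def algebra_simps)

end

lemma c1_ident_right [simp]: "u \<in> Mor C \<Longrightarrow> c1 u (Ident C (Dom C u)) = 0"
  using nr_cochain_degenerate[OF nr_cochain_c1, of "(Dom C u, [Ident C (Dom C u), u])" "[]"]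
  by (simp add: cochain_of_c_def args_def degenerate_def)

lemma c1_ident_left [simp]: "u \<in> Mor C \<Longrightarrow> c1 (Ident C (Cod C u)) u = 0"
  using nr_cochain_degenerate[OF nr_cochain_c1, of "(Dom C u, [u, Ident C (Cod C u)])" "[]"]
  by (simp add: cochain_of_c_def args_def degenerate_def)

lemma c1_cocycle:
  "\<lbrakk>u \<in> Mor C; v \<in> Mor C; w \<in> Mor C; Cod C v = Dom C u; Cod C w = Dom C v\<rbrakk> \<Longrightarrow>
     c1 u (Comp C v w) + c1 v w = c1 (Comp C u v) w + f w (c1 u v)"
  using dGS_vanishes[of 3 "(Dom C w, [w, v, u])" "[]"]
  by (simp add: cochain_of_c_def args_def dGS_def dsimp_def face_def GS2_def sgn_pow_def
      atLeastAtMost_Suc_0_2 algebra_simps)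

context
  fixes U assumes U: "U \<in> Obj C"
begin

lemma eps_smult_closed: "\<lbrakk>a \<in> A U; b \<in> A U\<rbrakk> \<Longrightarrow> eps_smult smult \<rho> (a, b) \<in> A U \<times> A U"
  using U by (cases \<rho>) simp

lemma eps_smult_add_right:
  "\<lbrakk>a \<in> A U; b \<in> A U; c \<in> A U; d \<in> A U\<rbrakk> \<Longrightarrow>
     eps_smult smult \<rho> (a + c, b + d) = eps_smult smult \<rho> (a, b) + eps_smult smult \<rho> (c, d)"
  using U by (cases \<rho>) (simp add: smult_add_right add_ac)

lemma eps_smult_add_left:
  "\<lbrakk>a \<in> A U; b \<in> A U\<rbrakk> \<Longrightarrow>
     eps_smult smult (\<rho> + \<tau>) (a, b) = eps_smult smult \<rho> (a, b) + eps_smult smult \<tau> (a, b)"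
  using U by (cases \<rho>; cases \<tau>) (simp add: smult_add_right smult_add_left add_ac)

lemma eps_smult_smult:
  "\<lbrakk>a \<in> A U; b \<in> A U\<rbrakk> \<Longrightarrow>
     eps_smult smult (\<rho> * \<tau>) (a, b) = eps_smult smult \<rho> (eps_smult smult \<tau> (a, b))"
  using U by (cases \<rho>; cases \<tau>) (simp add: smult_add_right smult_add_left smult_smult add_ac mult.commute)

lemma eps_smult_one: "\<lbrakk>a \<in> A U; b \<in> A U\<rbrakk> \<Longrightarrow> eps_smult smult 1 (a, b) = (a, b)"
  using U by (simp add: one_dnum_def smult_one smult_zero_left)

lemma eps_mult_closed: "\<lbrakk>a \<in> A U; b \<in> A U; c \<in> A U; d \<in> A U\<rbrakk> \<Longrightarrow> eps_mult m m1 U (a, b) (c, d) \<in> A U \<times> A U"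
  using U by simp

lemma eps_mult_add_left:
  "\<lbrakk>a \<in> A U; b \<in> A U; c \<in> A U; d \<in> A U; g \<in> A U; h \<in> A U\<rbrakk> \<Longrightarrow>
     eps_mult m m1 U (a + c, b + d) (g, h) = eps_mult m m1 U (a, b) (g, h) + eps_mult m m1 U (c, d) (g, h)"
  using U by (simp add: m_add_left m1_add_left add_ac)

lemma eps_mult_add_right:
  "\<lbrakk>a \<in> A U; b \<in> A U; c \<in> A U; d \<in> A U; g \<in> A U; h \<in> A U\<rbrakk> \<Longrightarrow>
     eps_mult m m1 U (g, h) (a + c, b + d) = eps_mult m m1 U (g, h) (a, b) + eps_mult m m1 U (g, h) (c, d)"
  using U by (simp add: m_add_right m1_add_right add_ac)

lemma eps_mult_smult_left:
  "\<lbrakk>a \<in> A U; b \<in> A U; g \<in> A U; h \<in> A U\<rbrakk> \<Longrightarrow>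
     eps_mult m m1 U (eps_smult smult \<rho> (a, b)) (g, h) = eps_smult smult \<rho> (eps_mult m m1 U (a, b) (g, h))"
  using U by (cases \<rho>) (simp add: m_add_left m1_smult_left m_smult_left smult_add_right add_ac)

lemma eps_mult_smult_right:
  "\<lbrakk>a \<in> A U; b \<in> A U; g \<in> A U; h \<in> A U\<rbrakk> \<Longrightarrow>
     eps_mult m m1 U (g, h) (eps_smult smult \<rho> (a, b)) = eps_smult smult \<rho> (eps_mult m m1 U (g, h) (a, b))"
  using U by (cases \<rho>) (simp add: m_add_right m1_smult_right m_smult_right smult_add_right add_ac)

lemma eps_mult_assoc:
  "\<lbrakk>a \<in> A U; b \<in> A U; c \<in> A U; d \<in> A U; g \<in> A U; h \<in> A U\<rbrakk> \<Longrightarrow>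
     eps_mult m m1 U (eps_mult m m1 U (a, b) (c, d)) (g, h) =
     eps_mult m m1 U (a, b) (eps_mult m m1 U (c, d) (g, h))"
  using U m1_hochschild_cocycle[OF U, of a c g] by (simp add: m_add_left m_add_right m_assoc algebra_simps)

lemma eps_mult_unit_left: "\<lbrakk>a \<in> A U; b \<in> A U\<rbrakk> \<Longrightarrow> eps_mult m m1 U (eps_unit e U) (a, b) = (a, b)"
  and eps_mult_unit_right: "\<lbrakk>a \<in> A U; b \<in> A U\<rbrakk> \<Longrightarrow> eps_mult m m1 U (a, b) (eps_unit e U) = (a, b)"
  using U by (simp_all add: eps_unit_def)

lemma eps_unit_closed: "eps_unit e U \<in> A U \<times> A U"
  using U by (simp add: eps_unit_def)

lemma algebra_on_eps: "algebra_on (eps_smult smult) (eps_carrier A U) (eps_mult m m1 U) (eps_unit e U)"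
  using U unfolding algebra_on_def module_on_def eps_carrier_def
  by (auto simp: zero_prod_def eps_smult_closed eps_smult_add_right eps_smult_add_left
      eps_smult_smult eps_smult_one eps_mult_closed eps_mult_add_left eps_mult_add_right
      eps_mult_smult_left eps_mult_smult_right eps_mult_assoc eps_mult_unit_left eps_mult_unit_right
      eps_unit_closed
      simp del: eps_smult.simps eps_mult.simps)

end

context
  fixes u assumes u: "u \<in> Mor C"
begin

lemma eps_map_closed: "\<lbrakk>a \<in> A (Cod C u); b \<in> A (Cod C u)\<rbrakk> \<Longrightarrow> eps_map f f1 u (a, b) \<in> A (Dom C u) \<times> A (Dom C u)"
  using u by simp

lemma eps_map_add:
  "\<lbrakk>a \<in> A (Cod C u); b \<in> A (Cod C u); c \<in> A (Cod C u); d \<in> A (Cod C u)\<rbrakk> \<Longrightarrow>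
     eps_map f f1 u (a + c, b + d) = eps_map f f1 u (a, b) + eps_map f f1 u (c, d)"
  using u by (simp add: f_add f1_add add_ac)

lemma eps_map_smult:
  "\<lbrakk>a \<in> A (Cod C u); b \<in> A (Cod C u)\<rbrakk> \<Longrightarrow>
     eps_map f f1 u (eps_smult smult \<rho> (a, b)) = eps_smult smult \<rho> (eps_map f f1 u (a, b))"
  using u by (cases \<rho>) (simp add: f_add f_smult f1_smult smult_add_right[OF Dom_in_Obj[OF u]] add_ac)

lemma eps_map_mult:
  "\<lbrakk>a \<in> A (Cod C u); b \<in> A (Cod C u); c \<in> A (Cod C u); d \<in> A (Cod C u)\<rbrakk> \<Longrightarrow>
     eps_map f f1 u (eps_mult m m1 (Cod C u) (a, b) (c, d)) =
     eps_mult m m1 (Dom C u) (eps_map f f1 u (a, b)) (eps_map f f1 u (c, d))"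
  using u f1_mult[OF u, of a c] by (simp add: f_add f1_add f_mult m_add_left m_add_right algebra_simps)

lemma eps_map_unit: "eps_map f f1 u (eps_unit e (Cod C u)) = eps_unit e (Dom C u)"
  using u by (simp add: eps_unit_def)

lemma algebra_hom_eps_map:
  "algebra_hom (eps_smult smult) (eps_carrier A (Cod C u)) (eps_mult m m1 (Cod C u)) (eps_unit e (Cod C u))
     (eps_carrier A (Dom C u)) (eps_mult m m1 (Dom C u)) (eps_unit e (Dom C u)) (eps_map f f1 u)"
  using eps_map_closed eps_map_add eps_map_smult eps_map_mult eps_map_unit
  unfolding algebra_hom_def eps_carrier_def
  by (auto simp del: eps_smult.simps eps_mult.simps eps_map.simps)

end

lemma eps_map_ident: "\<lbrakk>U \<in> Obj C; x \<in> eps_carrier A U\<rbrakk> \<Longrightarrow> eps_map f f1 (Ident C U) x = x"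
  by (cases x) (simp add: eps_carrier_def f_ident)

context
  fixes u v assumes u: "u \<in> Mor C" and v: "v \<in> Mor C" and uv: "Cod C v = Dom C u"
begin

lemma eps_twist_closed: "eps_twist C e c1 u v \<in> eps_carrier A (Dom C v)"
  using u v uv by (simp add: eps_twist_def eps_carrier_def)

lemma eps_twist_invertible:
  "\<exists>d\<in>eps_carrier A (Dom C v).
     eps_mult m m1 (Dom C v) (eps_twist C e c1 u v) d = eps_unit e (Dom C v) \<and>
     eps_mult m m1 (Dom C v) d (eps_twist C e c1 u v) = eps_unit e (Dom C v)"
  using u v uv
  by (intro bexI[of _ "(e (Dom C v), - c1 u v)"]) (simp_all add: eps_twist_def eps_carrier_def eps_unit_def)

lemma eps_twist_compat:
  assumes "x \<in> eps_carrier A (Cod C u)"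
  shows "eps_mult m m1 (Dom C v) (eps_twist C e c1 u v) (eps_map f f1 v (eps_map f f1 u x)) =
         eps_mult m m1 (Dom C v) (eps_map f f1 (Comp C u v) x) (eps_twist C e c1 u v)"
proof -
  obtain a b where x: "x = (a, b)" and a: "a \<in> A (Cod C u)" and b: "b \<in> A (Cod C u)"
    using assms by (auto simp: eps_carrier_def)
  have "f1 u a \<in> A (Cod C v)" "f u b \<in> A (Cod C v)" using u uv a b by simp_all
  moreover have "f1 (Comp C u v) a \<in> A (Dom C v)" "f v (f u b) \<in> A (Dom C v)"
    using f1_closed[of "Comp C u v" a] u v uv a b by simp_all
  ultimately show ?thesis
    using u v uv a b f1_comp_twisted[OF u v uv a]
    by (simp add: x eps_twist_def f_comp f_add[OF v] algebra_simps)
qed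

end

lemma eps_twist_cocycle:
  assumes "u \<in> Mor C" "v \<in> Mor C" "w \<in> Mor C" "Cod C w = Dom C v" "Cod C v = Dom C u"
  shows "eps_mult m m1 (Dom C w) (eps_twist C e c1 u (Comp C v w)) (eps_twist C e c1 v w) =
         eps_mult m m1 (Dom C w) (eps_twist C e c1 (Comp C u v) w) (eps_map f f1 w (eps_twist C e c1 u v))"
  using assms c1_cocycle[of u v w] c1_closed[of u "Comp C v w"] c1_closed[of "Comp C u v" w]
    f_unit[of w] f1_unit[of w]
  by (simp add: eps_twist_def algebra_simps)

lemma eps_twist_normalized:
  "u \<in> Mor C \<Longrightarrow> eps_twist C e c1 u (Ident C (Dom C u)) = eps_unit e (Dom C u)"
  "u \<in> Mor C \<Longrightarrow> eps_twist C e c1 (Ident C (Cod C u)) u = eps_unit e (Dom C u)"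
  by (simp_all add: eps_twist_def eps_unit_def)

theorem twisted_presheaf_eps:
  "twisted_presheaf C (eps_smult smult) (eps_carrier A) (eps_mult m m1) (eps_unit e)
     (eps_map f f1) (eps_twist C e c1)"
  unfolding twisted_presheaf_def
  using algebra_on_eps algebra_hom_eps_map eps_map_ident eps_twist_closed eps_twist_invertible
    eps_twist_compat eps_twist_cocycle eps_twist_normalized
  by blast

end

locale commutative_GS_2cocycle = GS_2cocycle +
  assumes commutative: "\<forall>U\<in>Obj C. commutative_on (A U) (m U)"
begin

lemma m_commute: "\<lbrakk>U \<in> Obj C; x \<in> A U; y \<in> A U\<rbrakk> \<Longrightarrow> m U x y = m U y x"
  using commutative unfolding commutative_on_def by blast

lemma central_twists_eps: "central_twists C (eps_carrier A) (eps_mult m m1) (eps_twist C e c1)"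
  unfolding central_twists_def
proof (intro ballI impI)
  fix u v x
  assume u: "u \<in> Mor C" and v: "v \<in> Mor C" and uv: "Cod C v = Dom C u" and x: "x \<in> eps_carrier A (Dom C v)"
  obtain a b where "x = (a, b)" "a \<in> A (Dom C v)" "b \<in> A (Dom C v)"
    using x by (auto simp: eps_carrier_def)
  then show "eps_mult m m1 (Dom C v) (eps_twist C e c1 u v) x = eps_mult m m1 (Dom C v) x (eps_twist C e c1 u v)"
    using u v uv m_commute[of "Dom C v" a "c1 u v"] by (simp add: eps_twist_def add_ac)
qed

lemma f1_comp:
  assumes "u \<in> Mor C" "v \<in> Mor C" "Cod C v = Dom C u" "a \<in> A (Cod C u)"
  shows "f1 (Comp C u v) a = f v (f1 u a) + f1 v (f u a)"
  using f1_comp_twisted[OF assms] m_commute[of "Dom C v" "c1 u v" "f v (f u a)"] assms by simp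

lemma Z_tGS_tGS2: "Z_tGS C smult A m e f 2 (tGS2 m1 f1)"
  unfolding Z_tGS_def
proof (intro conjI allI impI)
  fix p :: nat assume "p < 2"
  then have "tGS2 m1 f1 p = GS2 m1 f1 c1 p" by (simp add: tGS2_def GS2_def)
  then show "nr_cochain C smult A e p (2 - p) (tGS2 m1 f1 p)"
    using nr_cochain_GS2[of p] \<open>p < 2\<close> by simp
next
  fix p :: nat and \<sigma> as
  assume p: "p \<le> 2" and \<sigma>: "simplex C p \<sigma>" and as: "args C A (2 + 1 - p) \<sigma> as"
  let ?\<Phi> = "\<lambda>j. if j < 2 then tGS2 m1 f1 j else (\<lambda>_ _. 0)"
  show "dGS C m f 2 ?\<Phi> p \<sigma> as = 0"
  proof (cases "p = 2")
    case True
    obtain v u where "\<sigma> = (Dom C v, [v, u])" "v \<in> Mor C" "u \<in> Mor C" "Cod C v = Dom C u"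
      using \<sigma> True simplex_2_cases by blast
    moreover obtain a where "as = [a]" "a \<in> A (Cod C u)"
      using as True calculation unfolding args_def by (auto simp: length_Suc_conv)
    ultimately show ?thesis
      using True f1_comp[of u v a]
      by (simp add: dGS_def dHoch_def dsimp_def face_def tGS2_def cochain_of_f_def sgn_pow_def)
  next
    case False
    then have "dGS C m f 2 ?\<Phi> p \<sigma> as = dGS C m f 2 (GS2 m1 f1 c1) p \<sigma> as"
      using p by (auto simp: dGS_def tGS2_def GS2_def)
    then show ?thesis using dGS_vanishes[of p \<sigma> as] p \<sigma> as by simp
  qed
qed

end

theorem proposition2p24:
  fixes C :: "('o, 'm) cat"
    and smult :: "'k::comm_ring_1 \<Rightarrow> 'a::ab_group_add \<Rightarrow> 'a"
    and A :: "'o \<Rightarrow> 'a set" and m :: "'o \<Rightarrow> 'a \<Rightarrow> 'a \<Rightarrow> 'a" and e :: "'o \<Rightarrow> 'a"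
    and f :: "'m \<Rightarrow> 'a \<Rightarrow> 'a"
    and m1 :: "'o \<Rightarrow> 'a \<Rightarrow> 'a \<Rightarrow> 'a" and f1 :: "'m \<Rightarrow> 'a \<Rightarrow> 'a" and c1 :: "'m \<Rightarrow> 'm \<Rightarrow> 'a"
  assumes "category C"
    and "presheaf C smult A m e f"
    and "\<forall>U\<in>Obj C. commutative_on (A U) (m U)"
    and "Z_GS C smult A m e f 2 (GS2 m1 f1 c1)"
  shows "twisted_presheaf C (eps_smult smult) (eps_carrier A) (eps_mult m m1) (eps_unit e)
            (eps_map f f1) (eps_twist C e c1)
       \<and> central_twists C (eps_carrier A) (eps_mult m m1) (eps_twist C e c1)
       \<and> Z_tGS C smult A m e f 2 (tGS2 m1 f1)
       \<and> underlying_presheaf (twisted_deformation C A m e f m1 f1 c1) = presheaf_deformation A m e f m1 f1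
       \<and> presheaf C (eps_smult smult) (eps_carrier A) (eps_mult m m1) (eps_unit e) (eps_map f f1)"
proof -
  interpret commutative_GS_2cocycle C smult A m e f m1 f1 c1
    using assms by unfold_locales
  have twisted: "twisted_presheaf C (eps_smult smult) (eps_carrier A) (eps_mult m m1) (eps_unit e)
      (eps_map f f1) (eps_twist C e c1)"
    by (rule twisted_presheaf_eps)
  have "underlying_presheaf (twisted_deformation C A m e f m1 f1 c1) = presheaf_deformation A m e f m1 f1"
    by (simp add: underlying_presheaf_def twisted_deformation_def presheaf_deformation_def)
  with twisted show ?thesis
    using central_twists_eps Z_tGS_tGS2 presheaf_if_central_twists[OF category twisted central_twists_eps]
    by blast
qed

end
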